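(* Let $C=\{a,b,c\}$ and let $W_4\subseteq C^\omega$ be the set of infinite words which either contain infinitely many occurrences of the factor $bb$, or contain only finitely many occurrences of $b$ and only finitely many occurrences of the factor $aa$. Then the minimal number of states of a deterministic parity automaton recognising $W_4$ is $3$.
   Context: A deterministic parity automaton over $C$ consists of a finite set of states $Q$, an initial state $q_0$, a transition function $Q\times C\to Q$ and a priority function assigning a natural number to each transition. The run on $w\in C^\omega$ is the unique sequence of transitions from $q_0$ reading $w$; $w$ is accepted if the maximal priority occurring infinitely often along the run is even. The automaton recognises the set of accepted words. *)

theory Defs
  imports Main
begin

datatype letter = La | Lb | Lc

type_synonym word = "nat \<Rightarrow> letter"

definition is_dpa :: "nat set \<Rightarrow> nat \<Rightarrow> (nat \<Rightarrow> letter \<Rightarrow> nat) \<Rightarrow> (nat \<Rightarrow> letter \<Rightarrow> nat) \<Rightarrow> bool" where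
  "is_dpa Q q0 delta pri \<longleftrightarrow> finite Q \<and> q0 \<in> Q \<and> (\<forall>q\<in>Q. \<forall>x. delta q x \<in> Q)"

fun run :: "nat \<Rightarrow> (nat \<Rightarrow> letter \<Rightarrow> nat) \<Rightarrow> word \<Rightarrow> nat \<Rightarrow> nat" where
  "run q0 delta w 0 = q0"
| "run q0 delta w (Suc i) = delta (run q0 delta w i) (w i)"

definition run_pri :: "nat \<Rightarrow> (nat \<Rightarrow> letter \<Rightarrow> nat) \<Rightarrow> (nat \<Rightarrow> letter \<Rightarrow> nat) \<Rightarrow> word \<Rightarrow> nat \<Rightarrow> nat" where
  "run_pri q0 delta pri w i = pri (run q0 delta w i) (w i)"

definition accepts :: "nat \<Rightarrow> (nat \<Rightarrow> letter \<Rightarrow> nat) \<Rightarrow> (nat \<Rightarrow> letter \<Rightarrow> nat) \<Rightarrow> word \<Rightarrow> bool" where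
  "accepts q0 delta pri w \<longleftrightarrow>
     even (Max {p. infinite {i. run_pri q0 delta pri w i = p}})"

definition lang :: "nat \<Rightarrow> (nat \<Rightarrow> letter \<Rightarrow> nat) \<Rightarrow> (nat \<Rightarrow> letter \<Rightarrow> nat) \<Rightarrow> word set" where
  "lang q0 delta pri = {w. accepts q0 delta pri w}"

definition W4 :: "word set" where
  "W4 = {w. infinite {i. w i = Lb \<and> w (Suc i) = Lb}
           \<or> (finite {i. w i = Lb} \<and> finite {i. w i = La \<and> w (Suc i) = La})}"

end

theory Submission
  imports Defs "HOL-Library.Omega_Words_Fun"
begin

(*
  Upper bound: a DPA whose state is the last letter read sees every factor of length two.
  With priority 4 on the factor bb, 3 on the other factors starting with b, 1 on aa and 0
  otherwise, the maximal priority occurring infinitely often is even exactly on W4.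

  Lower bound: the priorities occurring infinitely often along a lasso x y\<^sup>\<omega>, whose loop y
  returns to the state s reached by x, are those of the transitions of y from s. Hence if u and
  v both loop at s, the words x (u v)\<^sup>\<omega> and x (u u v v)\<^sup>\<omega> are accepted or rejected together.
  For distinct u, v among cc, aca, baab, W4 contains exactly one of them, because doubling
  creates a factor aa or bb; and every DPA with at most two states has two of these loops at
  a state reached by a word of length at most one.
*)

lemma limit_comp_finite_range:
  assumes "finite (range w)"
  shows "limit (f \<circ> w) = f ` limit w"
proof
  show "limit (f \<circ> w) \<subseteq> f ` limit w"
  proof
    fix b assume "b \<in> limit (f \<circ> w)"
    then have "infinite {n. f (w n) = b}" by (simp add: limit_def Inf_many_def)
    moreover have "{n. f (w n) = b} = (\<Union>a \<in> range w \<inter> f -` {b}. {n. w n = a})" by auto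
    ultimately obtain a where "f a = b" "infinite {n. w n = a}" using assms by auto
    then show "b \<in> f ` limit w" by (auto simp: limit_def Inf_many_def)
  qed
qed auto

lemma conc_fixpoint_eq_iter:
  assumes "l \<noteq> []" and fixpoint: "w = l \<frown> w"
  shows "w = l\<^sup>\<omega>"
proof
  fix i show "w i = l\<^sup>\<omega> i"
  proof (induction i rule: less_induct)
    case (less i)
    show ?case
    proof (cases "i < length l")
      case True
      then show ?thesis using fixpoint by (metis conc_fst iter_nth mod_less not_gr_zero not_less0)
    next
      case False
      then have "w i = w (i - length l)" using fixpoint by (metis conc_snd)
      also have "\<dots> = l\<^sup>\<omega> (i - length l)"
        using False assms(1) by (intro less.IH) (cases l; auto)
      also have "\<dots> = l\<^sup>\<omega> i" using False assms(1) by (simp add: le_mod_geq)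
      finally show ?thesis .
    qed
  qed
qed

lemma comp_iter: "l \<noteq> [] \<Longrightarrow> f \<circ> l\<^sup>\<omega> = (map f l)\<^sup>\<omega>"
  by (simp add: fun_eq_iff)

fun transitions :: "('q \<Rightarrow> 'a \<Rightarrow> 'q) \<Rightarrow> 'q \<Rightarrow> 'a list \<Rightarrow> ('q \<times> 'a) list" where
  "transitions d q [] = []"
| "transitions d q (a # u) = (q, a) # transitions d (d q a) u"

lemma transitions_eq_Nil_iff [simp]: "transitions d q u = [] \<longleftrightarrow> u = []"
  by (cases u) auto

lemma transitions_append:
  "transitions d q (u @ v) = transitions d q u @ transitions d (foldl d q u) v"
  by (induction u arbitrary: q) auto

definition transition_word ::
    "nat \<Rightarrow> (nat \<Rightarrow> letter \<Rightarrow> nat) \<Rightarrow> letter word \<Rightarrow> (nat \<times> letter) word" where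
  "transition_word q0 d w i = (run q0 d w i, w i)"

lemma run_build_Suc: "run q d (a ## w) (Suc i) = run (d q a) d w i"
  by (induction i) auto

lemma transition_word_build:
  "transition_word q d (a ## w) = (q, a) ## transition_word (d q a) d w"
proof
  fix i show "transition_word q d (a ## w) i = ((q, a) ## transition_word (d q a) d w) i"
    by (cases i) (simp_all add: transition_word_def run_build_Suc del: run.simps(2))
qed

lemma transition_word_conc:
  "transition_word q d (u \<frown> w) = transitions d q u \<frown> transition_word (foldl d q u) d w"
  by (induction u arbitrary: q) (simp_all add: transition_word_build)

lemma transition_word_iter:
  assumes "y \<noteq> []" "foldl d s y = s"
  shows "transition_word s d y\<^sup>\<omega> = (transitions d s y)\<^sup>\<omega>"
proof (rule conc_fixpoint_eq_iter)
  show "transition_word s d y\<^sup>\<omega> = transitions d s y \<frown> transition_word s d y\<^sup>\<omega>"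
    using assms by (metis iter_unroll length_greater_0_conv transition_word_conc)
qed (simp add: assms(1))

lemma accepts_iff_limit: "accepts q0 d pri w \<longleftrightarrow> even (Max (limit (run_pri q0 d pri w)))"
  by (simp add: accepts_def limit_def Inf_many_def)

lemma limit_run_pri_lasso:
  assumes "y \<noteq> []" "foldl d q0 x = s" "foldl d s y = s"
  shows "limit (run_pri q0 d pri (x \<frown> y\<^sup>\<omega>)) = case_prod pri ` set (transitions d s y)"
proof -
  have "run_pri q0 d pri w = case_prod pri \<circ> transition_word q0 d w" for w
    by (simp add: fun_eq_iff run_pri_def transition_word_def)
  then have "run_pri q0 d pri (x \<frown> y\<^sup>\<omega>) =
      map (case_prod pri) (transitions d q0 x) \<frown> (map (case_prod pri) (transitions d s y))\<^sup>\<omega>"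
    using assms by (simp add: transition_word_conc transition_word_iter comp_iter)
  then show ?thesis using assms(1) by simp
qed

lemma accepts_lasso_loops_doubled:
  assumes "foldl d q0 x = s" "foldl d s u = s" "foldl d s v = s" "u \<noteq> []" "v \<noteq> []"
  shows "accepts q0 d pri (x \<frown> (u @ v)\<^sup>\<omega>) \<longleftrightarrow> accepts q0 d pri (x \<frown> (u @ u @ v @ v)\<^sup>\<omega>)"
  using assms by (simp add: accepts_iff_limit limit_run_pri_lasso transitions_append Un_ac)

definition adjacent_pairs :: "'a word \<Rightarrow> ('a \<times> 'a) word" where
  "adjacent_pairs w i = (w i, w (Suc i))"

lemma W4_iff_limit:
  "w \<in> W4 \<longleftrightarrow>
     (Lb, Lb) \<in> limit (adjacent_pairs w) \<or> Lb \<notin> limit w \<and> (La, La) \<notin> limit (adjacent_pairs w)"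
  by (simp add: W4_def limit_def Inf_many_def adjacent_pairs_def)

lemma limit_adjacent_pairs_lasso:
  assumes "y \<noteq> []"
  shows "limit (adjacent_pairs (x \<frown> y\<^sup>\<omega>)) = set (zip y (rotate1 y))"
proof -
  have "suffix (length x) (adjacent_pairs (x \<frown> y\<^sup>\<omega>)) =
      adjacent_pairs (suffix (length x) (x \<frown> y\<^sup>\<omega>))"
    by (simp add: fun_eq_iff adjacent_pairs_def)
  also have "\<dots> = (zip y (rotate1 y))\<^sup>\<omega>"
    using assms by (simp add: fun_eq_iff adjacent_pairs_def nth_rotate1 mod_Suc_eq)
  finally show ?thesis
    using assms by (metis limit_suffix limit_iter length_greater_0_conv zip_eq_Nil_iff rotate1_is_Nil_conv)
qed

lemma lasso_in_W4_iff:
  assumes "y \<noteq> []"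
  shows "x \<frown> y\<^sup>\<omega> \<in> W4 \<longleftrightarrow>
    (Lb, Lb) \<in> set (zip y (rotate1 y)) \<or> Lb \<notin> set y \<and> (La, La) \<notin> set (zip y (rotate1 y))"
  using assms by (simp add: W4_iff_limit limit_adjacent_pairs_lasso)

definition W4_loops :: "letter list set" where
  "W4_loops = {[Lc, Lc], [La, Lc, La], [Lb, La, La, Lb]}"

lemma W4_separates_loops_doubled:
  assumes "u \<in> W4_loops" "v \<in> W4_loops" "u \<noteq> v"
  shows "x \<frown> (u @ v)\<^sup>\<omega> \<in> W4 \<longleftrightarrow> x \<frown> (u @ u @ v @ v)\<^sup>\<omega> \<notin> W4"
  using assms by (auto simp: W4_loops_def lasso_in_W4_iff)

lemma two_state_common_W4_loops:
  assumes closed: "\<forall>q \<in> {q0, r}. \<forall>a. d q a \<in> {q0, r}"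
  shows "\<exists>s \<in> {q0, d q0 La, d q0 Lb, d q0 Lc}. \<exists>u \<in> W4_loops. \<exists>v \<in> W4_loops.
           u \<noteq> v \<and> foldl d s u = s \<and> foldl d s v = s"
proof (cases "r = q0")
  case True
  then show ?thesis using closed by (simp add: W4_loops_def)
next
  case False
  have "d q a = q0 \<or> d q a = r" if "q \<in> {q0, r}" for q a using closed that by blast
  then have "d q0 La = q0 \<or> d q0 La = r" "d q0 Lb = q0 \<or> d q0 Lb = r" "d q0 Lc = q0 \<or> d q0 Lc = r"
    "d r La = q0 \<or> d r La = r" "d r Lb = q0 \<or> d r Lb = r" "d r Lc = q0 \<or> d r Lc = r"
    by simp_all
  then show ?thesis
    using False False[symmetric] by (elim disjE) (simp_all add: W4_loops_def)
qed

lemma card_ge_3_if_recognises_W4: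
  assumes dpa: "is_dpa Q q0 d pri" and recognises: "lang q0 d pri = W4"
  shows "3 \<le> card Q"
proof (rule ccontr)
  assume "\<not> 3 \<le> card Q"
  moreover have "finite Q" and q0: "q0 \<in> Q" using dpa by (simp_all add: is_dpa_def)
  moreover have "card Q > 0" using \<open>finite Q\<close> q0 by (auto simp: card_gt_0_iff)
  ultimately consider "card Q = 1" | "card Q = 2" by linarith
  then obtain r where Q: "Q = {q0, r}"
  proof cases
    case 1
    then obtain a where "Q = {a}" by (rule card_1_singletonE)
    with q0 have "Q = {q0, q0}" by simp
    then show ?thesis by (rule that)
  next
    case 2
    then obtain x y where "Q = {x, y}" by (auto simp: card_2_iff)
    with q0 have "Q = {q0, y} \<or> Q = {q0, x}" by auto
    then show ?thesis using that by blast
  qed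
  then have closed: "\<forall>q \<in> {q0, r}. \<forall>a. d q a \<in> {q0, r}" using dpa by (simp add: is_dpa_def)
  obtain s u v where reached: "s \<in> {q0, d q0 La, d q0 Lb, d q0 Lc}"
    and loops: "u \<in> W4_loops" "v \<in> W4_loops" "u \<noteq> v" "foldl d s u = s" "foldl d s v = s"
    using two_state_common_W4_loops[OF closed] by blast
  have "s \<in> foldl d q0 ` {[], [La], [Lb], [Lc]}" using reached by simp
  then obtain x where x: "foldl d q0 x = s" by blast
  have "u \<noteq> []" "v \<noteq> []" using loops(1,2) by (auto simp: W4_loops_def)
  then have "accepts q0 d pri (x \<frown> (u @ v)\<^sup>\<omega>) \<longleftrightarrow> accepts q0 d pri (x \<frown> (u @ u @ v @ v)\<^sup>\<omega>)"
    using loops(4,5) x by (intro accepts_lasso_loops_doubled)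
  moreover have "accepts q0 d pri w \<longleftrightarrow> w \<in> W4" for w
    using recognises by (auto simp: lang_def)
  ultimately show False using W4_separates_loops_doubled[OF loops(1-3), of x] by blast
qed

lemma UNIV_letter: "UNIV = {La, Lb, Lc}"
  using letter.exhaust by auto

instance letter :: finite
  by standard (simp add: UNIV_letter)

definition letter_code :: "letter \<Rightarrow> nat" where
  "letter_code x = (case x of La \<Rightarrow> 0 | Lb \<Rightarrow> 1 | Lc \<Rightarrow> 2)"

definition W4_priority :: "nat \<Rightarrow> letter \<Rightarrow> nat" where
  "W4_priority q x = (if q = 1 then if x = Lb then 4 else 3 else if q = 0 \<and> x = La then 1 else 0)"

lemma limit_run_pri_W4_dpa:
  "limit (run_pri 2 (\<lambda>_. letter_code) W4_priority w) =
     (\<lambda>(x, y). W4_priority (letter_code x) y) ` limit (adjacent_pairs w)"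
proof -
  have "suffix 1 (run_pri 2 (\<lambda>_. letter_code) W4_priority w) =
      (\<lambda>(x, y). W4_priority (letter_code x) y) \<circ> adjacent_pairs w"
    by (simp add: fun_eq_iff run_pri_def adjacent_pairs_def)
  then show ?thesis by (metis limit_suffix limit_comp_finite_range finite)
qed

lemma even_Max_W4_priority_iff:
  assumes "finite L" "L \<noteq> {}"
  shows "even (Max ((\<lambda>(x, y). W4_priority (letter_code x) y) ` L)) \<longleftrightarrow>
           (Lb, Lb) \<in> L \<or> Lb \<notin> fst ` L \<and> (La, La) \<notin> L"
    (is "even (Max (?f ` L)) \<longleftrightarrow> _")
proof -
  have fin: "finite (?f ` L)" using assms(1) by simp
  consider "(Lb, Lb) \<in> L" | "(Lb, Lb) \<notin> L" "Lb \<in> fst ` L"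
    | "Lb \<notin> fst ` L" "(La, La) \<in> L" | "Lb \<notin> fst ` L" "(La, La) \<notin> L"
    by blast
  then show ?thesis
  proof cases
    case 1
    then have "Max (?f ` L) = 4"
      by (intro Max_eqI[OF fin]) (force simp: W4_priority_def letter_code_def split: letter.split)+
    then show ?thesis using 1 by simp
  next
    case 2
    then have "Max (?f ` L) = 3"
      by (intro Max_eqI[OF fin]) (force simp: W4_priority_def letter_code_def split: letter.split)+
    then show ?thesis using 2 by simp
  next
    case 3
    then have "Max (?f ` L) = 1"
      by (intro Max_eqI[OF fin]) (force simp: W4_priority_def letter_code_def split: letter.split)+
    then show ?thesis using 3 by force
  next
    case 4
    then have "Max (?f ` L) = 0"
      using assms(2)
      by (intro Max_eqI[OF fin]) (force simp: W4_priority_def letter_code_def split: letter.split)+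
    then show ?thesis using 4 by simp
  qed
qed

lemma lang_W4_dpa: "lang 2 (\<lambda>_. letter_code) W4_priority = W4"
proof (rule set_eqI)
  fix w :: "letter word"
  let ?L = "limit (adjacent_pairs w)"
  have "?L \<noteq> {}" using limit_nonempty[of "adjacent_pairs w"] by auto
  moreover have "limit w = fst ` ?L"
    using limit_comp_finite_range[of "adjacent_pairs w" fst]
    by (simp add: adjacent_pairs_def comp_def)
  ultimately show "w \<in> lang 2 (\<lambda>_. letter_code) W4_priority \<longleftrightarrow> w \<in> W4"
    by (simp add: lang_def accepts_iff_limit limit_run_pri_W4_dpa even_Max_W4_priority_iff
        W4_iff_limit)
qed

theorem propositionB2:
  shows "(LEAST n. \<exists>Q q0 delta pri. is_dpa Q q0 delta pri \<and> card Q = n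
                      \<and> lang q0 delta pri = W4) = 3"
proof (rule Least_equality)
  have "is_dpa {0, 1, 2} 2 (\<lambda>_. letter_code) W4_priority"
    by (simp add: is_dpa_def letter_code_def split: letter.split)
  then show "\<exists>Q q0 delta pri. is_dpa Q q0 delta pri \<and> card Q = 3 \<and> lang q0 delta pri = W4"
    using lang_W4_dpa by fastforce
next
  fix n
  assume "\<exists>Q q0 delta pri. is_dpa Q q0 delta pri \<and> card Q = n \<and> lang q0 delta pri = W4"
  then show "3 \<le> n" using card_ge_3_if_recognises_W4 by blast
qed

end
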